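(* Let $\mathfrak S$ be a commutative semiring and $\sigma_{\mathfrak S}$ a set of ideals of $\mathfrak S$ with the ideal topology. Then $\sigma_{\mathfrak S}$ is sober if and only if, for every ideal $\mathfrak a$ of $\mathfrak S$ such that the subbasic closed set $\mathfrak a^{\uparrow}$ is non-empty and irreducible, one has $\bigcap\{\mathfrak x\in\sigma_{\mathfrak S}\mid \mathfrak a\subseteq\mathfrak x\}\in\sigma_{\mathfrak S}$.
   Context: A semiring $(\mathfrak S,+,0,\cdot,1)$ has $(\mathfrak S,+,0)$ a commutative monoid, $(\mathfrak S,\cdot,1)$ a monoid, $0r=r0=0$, and two-sided distributivity; all semirings are commutative. An ideal is a nonempty proper subset closed under addition and under multiplication by elements of $\mathfrak S$. For an ideal $\mathfrak a$, $\mathfrak a^{\uparrow}=\{\mathfrak x\in\sigma_{\mathfrak S}\mid\mathfrak a\subseteq\mathfrak x\}$; the ideal topology on $\sigma_{\mathfrak S}$ has the sets $\mathfrak a^{\uparrow}$ ($\mathfrak a$ any ideal) as a subbasis of closed sets. A space is sober if every non-empty irreducible closed subset is the closure of a unique point. *)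

theory Defs
  imports "HOL-Analysis.Analysis"
begin

definition sr_ideal :: "'a::comm_semiring_1 set \<Rightarrow> bool" where
  "sr_ideal I \<longleftrightarrow> I \<noteq> {} \<and> I \<noteq> UNIV
     \<and> (\<forall>x\<in>I. \<forall>y\<in>I. x + y \<in> I)
     \<and> (\<forall>r. \<forall>x\<in>I. r * x \<in> I)"

definition up_set :: "'a set set \<Rightarrow> 'a set \<Rightarrow> 'a set set" where
  "up_set \<sigma> a = {x \<in> \<sigma>. a \<subseteq> x}"

text \<open>Ideal topology on sigma: the sets up_set sigma a (a any ideal) form a subbasis
  of closed sets; equivalently their complements in sigma (together with sigma itself)
  form a subbasis of open sets.\<close>
definition ideal_topology :: "'a::comm_semiring_1 set set \<Rightarrow> 'a set topology" where
  "ideal_topology \<sigma> =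
     topology_generated_by (insert \<sigma> {\<sigma> - up_set \<sigma> a | a. sr_ideal a})"

definition irreducible_in :: "'b topology \<Rightarrow> 'b set \<Rightarrow> bool" where
  "irreducible_in X A \<longleftrightarrow> A \<subseteq> topspace X \<and> A \<noteq> {} \<and>
     (\<forall>F1 F2. closedin X F1 \<and> closedin X F2 \<and> A \<subseteq> F1 \<union> F2 \<longrightarrow> A \<subseteq> F1 \<or> A \<subseteq> F2)"

definition sober :: "'b topology \<Rightarrow> bool" where
  "sober X \<longleftrightarrow> (\<forall>C. closedin X C \<and> C \<noteq> {} \<and> irreducible_in X C \<longrightarrow>
     (\<exists>!x. x \<in> topspace X \<and> C = X closure_of {x}))"

end

theory Submission
  imports Defs
begin

text \<open>Everything rests on one computation: the closure of an irreducible set \<open>C \<subseteq> \<sigma>\<close> is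
  \<open>(\<Inter>C)\<^sup>\<up>\<close>. If \<open>y \<in> \<sigma>\<close> lies outside that closure, a finite intersection of subbasic open
  sets contains \<open>y\<close> and misses \<open>C\<close>; by irreducibility a single subbasic set \<open>\<sigma> - a\<^sup>\<up>\<close>
  already misses \<open>C\<close>, so \<open>a \<subseteq> \<Inter>C\<close> but \<open>a \<not>\<subseteq> y\<close>. For singletons this gives that the
  closure of \<open>x\<close> is \<open>x\<^sup>\<up>\<close>, so distinct points have distinct closures (\<open>x = \<Inter>x\<^sup>\<up>\<close>); for an
  irreducible closed \<open>C\<close> it gives \<open>C = (\<Inter>C)\<^sup>\<up>\<close>, which is the closure of a point exactly
  when \<open>\<Inter>C \<in> \<sigma>\<close>.\<close>

lemma irreducible_in_disjoint_Int_openin: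
  assumes "irreducible_in X C" "openin X U" "openin X V" "C \<inter> (U \<inter> V) = {}"
  shows "C \<inter> U = {} \<or> C \<inter> V = {}"
proof -
  have "C \<subseteq> (topspace X - U) \<union> (topspace X - V)"
    using assms(1,4) unfolding irreducible_in_def by blast
  then have "C \<subseteq> topspace X - U \<or> C \<subseteq> topspace X - V"
    using assms(1-3) unfolding irreducible_in_def by blast
  then show ?thesis by blast
qed

lemma subset_closure_of_irreducible_subbasis:
  assumes irr: "irreducible_in (topology_generated_by S) C"
    and "D \<subseteq> \<Union>S"
    and subbasis: "\<And>s. s \<in> S \<Longrightarrow> s \<inter> C = {} \<Longrightarrow> s \<inter> D = {}"
  shows "D \<subseteq> topology_generated_by S closure_of C"
proof -
  have disjoint: "C \<inter> U = {} \<longrightarrow> D \<inter> U = {}" if "generate_topology_on S U" for U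
    using that
  proof (induction rule: generate_topology_on.induct)
    case (Int U V)
    then have "openin (topology_generated_by S) U" "openin (topology_generated_by S) V"
      by (simp_all add: openin_topology_generated_by_iff)
    then show ?case
      using Int.IH irreducible_in_disjoint_Int_openin[OF irr] by blast
  next
    case (UN K)
    then show ?case by blast
  next
    case (Basis s)
    then show ?case using subbasis by blast
  qed auto
  show ?thesis
  proof
    fix x assume "x \<in> D"
    then show "x \<in> topology_generated_by S closure_of C"
      using \<open>D \<subseteq> \<Union>S\<close> disjoint
      unfolding in_closure_of openin_topology_generated_by_iff topology_generated_by_topspace
      by blast
  qed
qed

lemma irreducible_in_singleton: "x \<in> topspace X \<Longrightarrow> irreducible_in X {x}"
  unfolding irreducible_in_def by auto

lemma topspace_ideal_topology [simp]: "topspace (ideal_topology \<sigma>) = \<sigma>"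
  unfolding ideal_topology_def up_set_def by auto

lemma closedin_up_set: "sr_ideal a \<Longrightarrow> closedin (ideal_topology \<sigma>) (up_set \<sigma> a)"
  unfolding closedin_def ideal_topology_def openin_topology_generated_by_iff
  by (auto simp: up_set_def intro!: generate_topology_on.Basis)

lemma Inter_up_set: "x \<in> \<sigma> \<Longrightarrow> \<Inter>(up_set \<sigma> x) = x"
  unfolding up_set_def by auto

lemma zero_in_sr_ideal: "sr_ideal a \<Longrightarrow> 0 \<in> a"
  unfolding sr_ideal_def by (metis ex_in_conv mult_zero_left)

lemma sr_ideal_Inter:
  assumes "C \<noteq> {}" "\<forall>x\<in>C. sr_ideal x"
  shows "sr_ideal (\<Inter>C)"
proof -
  have "\<Inter>C \<noteq> UNIV" using assms unfolding sr_ideal_def by auto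
  moreover have "0 \<in> \<Inter>C" using assms(2) zero_in_sr_ideal by blast
  ultimately show ?thesis using assms(2) unfolding sr_ideal_def by auto
qed

lemma closure_of_irreducible_ideal_topology:
  assumes ideals: "\<forall>x\<in>\<sigma>. sr_ideal x"
    and irr: "irreducible_in (ideal_topology \<sigma>) C"
  shows "ideal_topology \<sigma> closure_of C = up_set \<sigma> (\<Inter>C)"
proof
  have C: "C \<noteq> {}" "C \<subseteq> \<sigma>" using irr unfolding irreducible_in_def by auto
  then have "sr_ideal (\<Inter>C)" using ideals sr_ideal_Inter by blast
  then show "ideal_topology \<sigma> closure_of C \<subseteq> up_set \<sigma> (\<Inter>C)"
    using C by (intro closure_of_minimal closedin_up_set) (auto simp: up_set_def)
  have subbasic: "s \<inter> up_set \<sigma> (\<Inter>C) = {}"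
    if "s \<in> insert \<sigma> {\<sigma> - up_set \<sigma> a | a. sr_ideal a}" "s \<inter> C = {}" for s
    using that C unfolding up_set_def by blast
  show "up_set \<sigma> (\<Inter>C) \<subseteq> ideal_topology \<sigma> closure_of C"
    using irr unfolding ideal_topology_def
    by (intro subset_closure_of_irreducible_subbasis subbasic) (auto simp: up_set_def)
qed

lemma closure_of_singleton_ideal_topology:
  "\<forall>x\<in>\<sigma>. sr_ideal x \<Longrightarrow> x \<in> \<sigma> \<Longrightarrow> ideal_topology \<sigma> closure_of {x} = up_set \<sigma> x"
  using closure_of_irreducible_ideal_topology[of \<sigma> "{x}"] irreducible_in_singleton[of x]
  by simp

lemma closedin_irreducible_ideal_topology_eq:
  assumes "\<forall>x\<in>\<sigma>. sr_ideal x" "closedin (ideal_topology \<sigma>) C" "irreducible_in (ideal_topology \<sigma>) C"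
  shows "up_set \<sigma> (\<Inter>C) = C"
  using closure_of_irreducible_ideal_topology[OF assms(1,3)] closure_of_closedin[OF assms(2)]
  by simp

theorem theorem3p9:
  fixes \<sigma> :: "'a::comm_semiring_1 set set"
  assumes "\<forall>x\<in>\<sigma>. sr_ideal x"
  shows "sober (ideal_topology \<sigma>) \<longleftrightarrow>
    (\<forall>a. sr_ideal a \<and> up_set \<sigma> a \<noteq> {} \<and> irreducible_in (ideal_topology \<sigma>) (up_set \<sigma> a)
         \<longrightarrow> \<Inter>{x \<in> \<sigma>. a \<subseteq> x} \<in> \<sigma>)"
  unfolding up_set_def [symmetric]
proof (intro iffI allI impI)
  fix a assume sober: "sober (ideal_topology \<sigma>)"
    and a: "sr_ideal a \<and> up_set \<sigma> a \<noteq> {} \<and> irreducible_in (ideal_topology \<sigma>) (up_set \<sigma> a)"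
  then have "closedin (ideal_topology \<sigma>) (up_set \<sigma> a)" using closedin_up_set by blast
  then have "\<exists>x. x \<in> \<sigma> \<and> up_set \<sigma> a = ideal_topology \<sigma> closure_of {x}"
    using sober a unfolding sober_def topspace_ideal_topology by (meson ex1_implies_ex)
  then obtain x where "x \<in> \<sigma>" "up_set \<sigma> a = up_set \<sigma> x"
    using closure_of_singleton_ideal_topology[OF assms] by blast
  then show "\<Inter>(up_set \<sigma> a) \<in> \<sigma>" by (simp add: Inter_up_set)
next
  assume points: "\<forall>a. sr_ideal a \<and> up_set \<sigma> a \<noteq> {} \<and> irreducible_in (ideal_topology \<sigma>) (up_set \<sigma> a)
         \<longrightarrow> \<Inter>(up_set \<sigma> a) \<in> \<sigma>"
  show "sober (ideal_topology \<sigma>)"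
    unfolding sober_def topspace_ideal_topology
  proof (intro allI impI)
    fix C assume C: "closedin (ideal_topology \<sigma>) C \<and> C \<noteq> {} \<and> irreducible_in (ideal_topology \<sigma>) C"
    then have C_eq: "up_set \<sigma> (\<Inter>C) = C"
      using closedin_irreducible_ideal_topology_eq[OF assms] by blast
    have "C \<subseteq> \<sigma>" using C closedin_subset by fastforce
    then have "sr_ideal (\<Inter>C)" using C assms sr_ideal_Inter by blast
    then have "\<Inter>C \<in> \<sigma>" using points[rule_format, of "\<Inter>C"] C by (simp add: C_eq)
    show "\<exists>!x. x \<in> \<sigma> \<and> C = ideal_topology \<sigma> closure_of {x}"
    proof (rule ex1I[where a = "\<Inter>C"])
      show "\<Inter>C \<in> \<sigma> \<and> C = ideal_topology \<sigma> closure_of {\<Inter>C}"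
        using \<open>\<Inter>C \<in> \<sigma>\<close> closure_of_singleton_ideal_topology[OF assms] C_eq by simp
      show "x = \<Inter>C" if "x \<in> \<sigma> \<and> C = ideal_topology \<sigma> closure_of {x}" for x
        using that by (simp add: closure_of_singleton_ideal_topology[OF assms] Inter_up_set)
    qed
  qed
qed

end
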